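(* Let $L\ge1$, $\sigma_1,\dots,\sigma_L\in\mathfrak S_{2k}$, $\varepsilon_1,\dots,\varepsilon_L\in\{1,*\}$, let $T=T^{\varepsilon_1,\dots,\varepsilon_L}_{\sigma_1,\dots,\sigma_L}$ be the strip hypergraph and let $\pi$ be any partition of its vertex set $V$. Then $q(\pi,0)\le0$ and the sequence $(q(\pi,\ell))_{\ell=0,\dots,L}$ is non-increasing. In particular $-k-k|\bar E^\pi|+|V^\pi|=q(\pi,L)\le0$, where $(V^\pi,\bar E^\pi)$ is the skeleton of $T^\pi$.
   Context: Fix $k\ge1$; $\mathfrak S_{2k}$ is the symmetric group on $\{1,\dots,2k\}$. A $*$-test hypergraph $(V,E,\sigma,\varepsilon)$ consists of a finite vertex set $V$, a finite multiset $E$ of hyperedges $e=(v_1,\dots,v_{2k})\in V^{2k}$ (the first $k$ entries are the inputs, the last $k$ the outputs), and labels $\sigma(e)\in\mathfrak S_{2k}$, $\varepsilon(e)\in\{1,*\}$. Strip hypergraph $T=T^{\varepsilon_1,\dots,\varepsilon_L}_{\sigma_1,\dots,\sigma_L}$: $V=\{(i,\ell):i\in[k],\ell\in[L]\}$, hyperedges $e_\ell=((1,\ell+1),\dots,(k,\ell+1),(1,\ell),\dots,(k,\ell))$ for $\ell\in[L]$ (each with multiplicity one), with the convention $(i,L+1)=(i,1)$, labels $\sigma(e_\ell)=\sigma_\ell$, $\varepsilon(e_\ell)=\varepsilon_\ell$. For $0\le\ell\le L-1$, $S_\ell$ is the hypergraph with vertex set $V_\ell=\{(i,j):i\in[k],j\in[\ell+1]\}$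 and hyperedges $e_1,\dots,e_\ell$; $S_L=T$. A partition $\pi$ of $V$ induces (by restriction) a partition of each $V_\ell$ and thus a quotient $S_\ell^\pi$: its vertices are the blocks of the restricted partition, and each hyperedge $(v_1,\dots,v_{2k})$ becomes $(B_1,\dots,B_{2k})$ with $v_s\in B_s$. The skeleton of a quotient with vertex set $V^\pi_\ell$ and hyperedges $E^\pi_\ell$ is the pair $(V^\pi_\ell,\bar E^\pi_\ell)$, where $\bar E^\pi_\ell$ is the set (without multiplicity) of the underlying vertex sets $\{B_1,\dots,B_{2k}\}$ of the hyperedges $(B_1,\dots,B_{2k})\in E^\pi_\ell$. Define $q(\pi,\ell)=-k-k|\bar E^\pi_\ell|+|V^\pi_\ell|$ for $\ell=0,\dots,L$. *)

theory Defs
  imports "HOL-Combinatorics.Permutations" "HOL-Library.Disjoint_Sets"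
begin

text \<open>A *-test hypergraph: a vertex set together with a list of hyperedges (list = multiset,
  order irrelevant).  Each hyperedge is a tuple (list of length 2k) of vertices, with its labels:
  a permutation sigma of {1..2k} and epsilon (True meaning *, False meaning 1).\<close>
type_synonym 'v hypergraph = "'v set \<times> ('v list \<times> (nat \<Rightarrow> nat) \<times> bool) list"

definition restrict_partition :: "'v set set \<Rightarrow> 'v set \<Rightarrow> 'v set set" where
  "restrict_partition P W = {B \<inter> W | B. B \<in> P \<and> B \<inter> W \<noteq> {}}"

definition block_of :: "'v set set \<Rightarrow> 'v \<Rightarrow> 'v set" where
  "block_of Q v = (THE B. B \<in> Q \<and> v \<in> B)"

definition quot_vertices :: "'v set set \<Rightarrow> 'v hypergraph \<Rightarrow> 'v set set" where
  "quot_vertices P H = restrict_partition P (fst H)"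

definition quot_edges :: "'v set set \<Rightarrow> 'v hypergraph \<Rightarrow> ('v set list \<times> (nat \<Rightarrow> nat) \<times> bool) list" where
  "quot_edges P H = map (\<lambda>(e, s, t). (map (block_of (quot_vertices P H)) e, s, t)) (snd H)"

definition skel_edges :: "'v set set \<Rightarrow> 'v hypergraph \<Rightarrow> 'v set set set" where
  "skel_edges P H = (\<lambda>(e, s, t). set e) ` set (quot_edges P H)"

definition qval :: "nat \<Rightarrow> 'v set set \<Rightarrow> 'v hypergraph \<Rightarrow> int" where
  "qval k P H = - int k - int k * int (card (skel_edges P H)) + int (card (quot_vertices P H))"

definition strip_vertices :: "nat \<Rightarrow> nat \<Rightarrow> (nat \<times> nat) set" where
  "strip_vertices k L = {1..k} \<times> {1..L}"

definition strip_edge :: "nat \<Rightarrow> nat \<Rightarrow> nat \<Rightarrow> (nat \<times> nat) list" where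
  "strip_edge k L l =
     map (\<lambda>i. (i, if l = L then 1 else l + 1)) [1..<k+1] @ map (\<lambda>i. (i, l)) [1..<k+1]"

definition strip_labelled_edges ::
  "nat \<Rightarrow> nat \<Rightarrow> (nat \<Rightarrow> nat \<Rightarrow> nat) \<Rightarrow> (nat \<Rightarrow> bool) \<Rightarrow> nat \<Rightarrow>
   ((nat \<times> nat) list \<times> (nat \<Rightarrow> nat) \<times> bool) list" where
  "strip_labelled_edges k L \<sigma> \<epsilon> m = map (\<lambda>l. (strip_edge k L l, \<sigma> l, \<epsilon> l)) [1..<m+1]"

definition strip_hypergraph ::
  "nat \<Rightarrow> nat \<Rightarrow> (nat \<Rightarrow> nat \<Rightarrow> nat) \<Rightarrow> (nat \<Rightarrow> bool) \<Rightarrow> (nat \<times> nat) hypergraph" where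
  "strip_hypergraph k L \<sigma> \<epsilon> = (strip_vertices k L, strip_labelled_edges k L \<sigma> \<epsilon> L)"

definition strip_partial ::
  "nat \<Rightarrow> nat \<Rightarrow> (nat \<Rightarrow> nat \<Rightarrow> nat) \<Rightarrow> (nat \<Rightarrow> bool) \<Rightarrow> nat \<Rightarrow> (nat \<times> nat) hypergraph" where
  "strip_partial k L \<sigma> \<epsilon> l =
     (if l = L then strip_hypergraph k L \<sigma> \<epsilon>
      else ({1..k} \<times> {1..l+1}, strip_labelled_edges k L \<sigma> \<epsilon> l))"

end

theory Submission
  imports Defs
begin

text \<open>
  Since every hyperedge of \<open>S\<^sub>\<ell>\<close> lies inside \<open>V\<^sub>\<ell>\<close>, the quotient \<open>S\<^sub>\<ell>\<^sup>\<pi>\<close> can be computed with the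
  blocks of \<open>\<pi>\<close> themselves: its vertices are the blocks meeting \<open>V\<^sub>\<ell>\<close> and its skeleton edges are
  the sets of blocks met by the hyperedges.  \<open>S\<^sub>0\<close> has \<open>k\<close> vertices and no hyperedge, so
  \<open>q(\<pi>,0) \<le> 0\<close>.  Passing from \<open>S\<^sub>\<ell>\<close> to \<open>S\<^sub>\<ell>\<^sub>+\<^sub>1\<close> adds the hyperedge \<open>e\<^sub>\<ell>\<^sub>+\<^sub>1\<close> and at most
  \<open>k\<close> new vertices, all lying on \<open>e\<^sub>\<ell>\<^sub>+\<^sub>1\<close>.  If the set of blocks met by \<open>e\<^sub>\<ell>\<^sub>+\<^sub>1\<close> is already a
  skeleton edge, all these blocks already meet \<open>V\<^sub>\<ell>\<close> and nothing changes; otherwise the skeleton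
  gains one edge, costing \<open>k\<close>, and at most \<open>k\<close> new blocks.
\<close>

lemma block_of_eq:
  assumes "partition_on V P" "B \<in> P" "v \<in> B"
  shows "block_of P v = B"
  unfolding block_of_def
proof (rule the_equality)
  fix B' assume "B' \<in> P \<and> v \<in> B'"
  then show "B' = B"
    using disjointD[OF partition_onD2[OF assms(1)] _ assms(2)] assms(3) by blast
qed (use assms in simp)

lemma block_of_mem:
  assumes "partition_on V P" "v \<in> V"
  shows "block_of P v \<in> P" and "v \<in> block_of P v"
proof -
  obtain B where "B \<in> P" "v \<in> B"
    using partition_onD1[OF assms(1)] assms(2) by blast
  then show "block_of P v \<in> P" "v \<in> block_of P v"
    using block_of_eq[OF assms(1)] by simp_all
qed

lemma image_block_of_partition:
  assumes "partition_on V P"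
  shows "block_of P ` V = P"
proof
  show "block_of P ` V \<subseteq> P" using block_of_mem(1)[OF assms] by blast
  show "P \<subseteq> block_of P ` V"
  proof
    fix B assume "B \<in> P"
    then obtain v where "v \<in> B"
      using partition_onD3[OF assms] by (metis all_not_in_conv)
    then have "v \<in> V" "block_of P v = B"
      using \<open>B \<in> P\<close> partition_onD1[OF assms] block_of_eq[OF assms] by blast+
    then show "B \<in> block_of P ` V" by blast
  qed
qed

lemma restrict_partition_eq: "restrict_partition P W = (\<inter>) W ` P - {{}}"
  unfolding restrict_partition_def by blast

lemma partition_on_restrict_partition:
  assumes "partition_on V P" "W \<subseteq> V"
  shows "partition_on W (restrict_partition P W)"
  using partition_on_restrict[OF assms(1), of W] assms(2)
  by (simp add: restrict_partition_eq Int_absorb2)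

lemma block_of_restrict_partition:
  assumes "partition_on V P" "W \<subseteq> V" "v \<in> W"
  shows "block_of (restrict_partition P W) v = block_of P v \<inter> W"
proof (rule block_of_eq[OF partition_on_restrict_partition[OF assms(1,2)]])
  have "block_of P v \<in> P" "v \<in> block_of P v"
    using block_of_mem[OF assms(1)] assms(2,3) by blast+
  then show "block_of P v \<inter> W \<in> restrict_partition P W"
    unfolding restrict_partition_def using assms(3) by blast
qed (use assms block_of_mem(2)[OF assms(1)] in blast)

lemma restrict_partition_eq_image_block_of:
  assumes "partition_on V P" "W \<subseteq> V"
  shows "restrict_partition P W = (\<lambda>B. B \<inter> W) ` block_of P ` W"
proof -
  have "restrict_partition P W = block_of (restrict_partition P W) ` W"
    using image_block_of_partition[OF partition_on_restrict_partition[OF assms]] by simp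
  also have "\<dots> = (\<lambda>v. block_of P v \<inter> W) ` W"
    using block_of_restrict_partition[OF assms] by simp
  finally show ?thesis by (simp add: image_image)
qed

lemma inj_on_Int_block_of:
  assumes "partition_on V P" "W \<subseteq> V"
  shows "inj_on (\<lambda>B. B \<inter> W) (block_of P ` W)"
proof (rule inj_onI)
  fix B1 B2 assume "B1 \<in> block_of P ` W" "B2 \<in> block_of P ` W" and eq: "B1 \<inter> W = B2 \<inter> W"
  then obtain v1 v2 where "v1 \<in> W" "B1 = block_of P v1" "v2 \<in> W" "B2 = block_of P v2"
    by blast
  then have "v1 \<in> B1" "v1 \<in> B2" "B2 \<in> P"
    using block_of_mem[OF assms(1)] assms(2) eq by blast+
  then show "B1 = B2"
    using block_of_eq[OF assms(1)] \<open>B1 = block_of P v1\<close> by metis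
qed

definition block_skeleton :: "'v set set \<Rightarrow> ('v list \<times> 'l) list \<Rightarrow> 'v set set set" where
  "block_skeleton P E = (\<lambda>(e, _). block_of P ` set e) ` set E"

lemma block_skeleton_snoc:
  "block_skeleton P (E @ [(e, x)]) = insert (block_of P ` set e) (block_skeleton P E)"
  unfolding block_skeleton_def by simp

lemma skel_edges_eq_block_skeleton:
  assumes "partition_on V P" "W \<subseteq> V" "\<forall>(e, _) \<in> set E. set e \<subseteq> W"
  shows "skel_edges P (W, E) = (`) (\<lambda>B. B \<inter> W) ` block_skeleton P E"
proof -
  have edge: "set (map (block_of (quot_vertices P (W, E))) e) = (\<lambda>B. B \<inter> W) ` block_of P ` set e"
    if "set e \<subseteq> W" for e
  proof -
    have "block_of (quot_vertices P (W, E)) v = block_of P v \<inter> W" if "v \<in> set e" for v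
      using block_of_restrict_partition[OF assms(1,2)] \<open>set e \<subseteq> W\<close> that
      unfolding quot_vertices_def by auto
    then show ?thesis by (simp add: image_image)
  qed
  have "skel_edges P (W, E) = (\<lambda>(e, _). set (map (block_of (quot_vertices P (W, E))) e)) ` set E"
    unfolding skel_edges_def quot_edges_def by (simp add: image_image case_prod_beta)
  also have "\<dots> = (\<lambda>(e, _). (\<lambda>B. B \<inter> W) ` block_of P ` set e) ` set E"
  proof (rule image_cong[OF refl])
    fix ey assume "ey \<in> set E"
    moreover obtain e y where "ey = (e, y)" by (cases ey)
    ultimately have "set e \<subseteq> W" using assms(3) by blast
    then show "(\<lambda>(e, _). set (map (block_of (quot_vertices P (W, E))) e)) ey =
        (\<lambda>(e, _). (\<lambda>B. B \<inter> W) ` block_of P ` set e) ey"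
      using edge \<open>ey = (e, y)\<close> by simp
  qed
  also have "\<dots> = (`) (\<lambda>B. B \<inter> W) ` block_skeleton P E"
    unfolding block_skeleton_def by (simp add: image_image case_prod_beta)
  finally show ?thesis .
qed

lemma qval_eq_block_count:
  assumes "partition_on V P" "W \<subseteq> V" "\<forall>(e, _) \<in> set E. set e \<subseteq> W"
  shows "qval k P (W, E) =
    - int k - int k * int (card (block_skeleton P E)) + int (card (block_of P ` W))"
proof -
  note inj = inj_on_Int_block_of[OF assms(1,2)]
  have "card (quot_vertices P (W, E)) = card (block_of P ` W)"
    unfolding quot_vertices_def restrict_partition_eq_image_block_of[OF assms(1,2)] snd_conv fst_conv
    using inj by (rule card_image)
  moreover have "inj_on ((`) (\<lambda>B. B \<inter> W)) (block_skeleton P E)"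
  proof (rule inj_on_image, rule inj_on_subset[OF inj])
    show "\<Union> (block_skeleton P E) \<subseteq> block_of P ` W"
      using assms(3) unfolding block_skeleton_def by fastforce
  qed
  then have "card (skel_edges P (W, E)) = card (block_skeleton P E)"
    unfolding skel_edges_eq_block_skeleton[OF assms] by (rule card_image)
  ultimately show ?thesis unfolding qval_def by simp
qed

lemma qval_without_edges_le:
  assumes "partition_on V P" "W \<subseteq> V" "finite W" "card W \<le> k"
  shows "qval k P (W, []) \<le> 0"
proof -
  have "card (block_of P ` W) \<le> k"
    using card_image_le[OF assms(3)] assms(4) by (rule le_trans)
  then show ?thesis
    using qval_eq_block_count[OF assms(1,2), of "[]"] by (simp add: block_skeleton_def)
qed

lemma qval_snoc_edge_le:
  assumes "partition_on V P" "W \<union> N \<subseteq> V" "\<forall>(e', _) \<in> set E. set e' \<subseteq> W"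
    and "finite N" "card N \<le> k" "N \<subseteq> set e" "set e \<subseteq> W \<union> N"
  shows "qval k P (W \<union> N, E @ [(e, x)]) \<le> qval k P (W, E)"
proof -
  let ?b = "block_of P ` set e"
  have "\<forall>(e', _) \<in> set (E @ [(e, x)]). set e' \<subseteq> W \<union> N"
    using assms(3,7) by auto
  then have q_new: "qval k P (W \<union> N, E @ [(e, x)]) = - int k
      - int k * int (card (insert ?b (block_skeleton P E))) + int (card (block_of P ` (W \<union> N)))"
    using qval_eq_block_count[OF assms(1,2)] by (simp add: block_skeleton_snoc)
  have q_old: "qval k P (W, E) = - int k
      - int k * int (card (block_skeleton P E)) + int (card (block_of P ` W))"
    using qval_eq_block_count[OF assms(1) _ assms(3)] assms(2) by blast
  show ?thesis
  proof (cases "?b \<in> block_skeleton P E")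
    case True
    then obtain e' x' where "(e', x') \<in> set E" "?b = block_of P ` set e'"
      unfolding block_skeleton_def by auto
    then have "set e' \<subseteq> W" using assms(3) by auto
    then have "block_of P ` N \<subseteq> block_of P ` W"
      using assms(6) \<open>?b = block_of P ` set e'\<close> by (metis image_mono order_trans)
    then have "block_of P ` (W \<union> N) = block_of P ` W" by blast
    with True show ?thesis
      unfolding q_new q_old by (simp add: insert_absorb)
  next
    case False
    have "card (block_of P ` N) \<le> k"
      using card_image_le[OF assms(4)] assms(5) by (rule le_trans)
    then have "card (block_of P ` (W \<union> N)) \<le> card (block_of P ` W) + k"
      using card_Un_le[of "block_of P ` W" "block_of P ` N"] by (simp add: image_Un)
    moreover have "finite (block_skeleton P E)"
      unfolding block_skeleton_def by simp
    ultimately show ?thesis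
      unfolding q_new q_old using False by (simp add: algebra_simps)
  qed
qed

lemma set_strip_edge:
  "set (strip_edge k L l) = {1..k} \<times> {if l = L then 1 else l + 1} \<union> {1..k} \<times> {l}"
  unfolding strip_edge_def by auto

lemma strip_labelled_edges_Suc:
  "strip_labelled_edges k L \<sigma> \<epsilon> (Suc m) =
    strip_labelled_edges k L \<sigma> \<epsilon> m @ [(strip_edge k L (Suc m), \<sigma> (Suc m), \<epsilon> (Suc m))]"
  unfolding strip_labelled_edges_def by simp

lemma strip_labelled_edges_subset:
  assumes "m < L"
  shows "\<forall>(e, _) \<in> set (strip_labelled_edges k L \<sigma> \<epsilon> m). set e \<subseteq> {1..k} \<times> {1..m+1}"
  using assms unfolding strip_labelled_edges_def by (auto simp: set_strip_edge)

lemma qval_strip_partial_0_le: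
  assumes "partition_on (strip_vertices k L) P" "L \<ge> 1"
  shows "qval k P (strip_partial k L \<sigma> \<epsilon> 0) \<le> 0"
proof -
  have "strip_partial k L \<sigma> \<epsilon> 0 = ({1..k} \<times> {1}, [])"
    using assms(2) unfolding strip_partial_def strip_labelled_edges_def by auto
  moreover have "{1..k} \<times> {1} \<subseteq> strip_vertices k L"
    using assms(2) unfolding strip_vertices_def by auto
  ultimately show ?thesis
    using qval_without_edges_le[OF assms(1)] by (simp add: card_cartesian_product)
qed

lemma qval_strip_partial_Suc_le:
  assumes "partition_on (strip_vertices k L) P" "l < L"
  shows "qval k P (strip_partial k L \<sigma> \<epsilon> (Suc l)) \<le> qval k P (strip_partial k L \<sigma> \<epsilon> l)"
proof -
  define W where "W = {1..k} \<times> {1..l+1}"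
  \<comment> \<open>the last hyperedge closes the strip onto column 1 and brings no new vertex\<close>
  define N where "N = (if Suc l = L then {} else {1..k} \<times> {l+2})"
  define E where "E = strip_labelled_edges k L \<sigma> \<epsilon> l"
  let ?e = "strip_edge k L (Suc l)"
  have "strip_partial k L \<sigma> \<epsilon> l = (W, E)"
    using assms(2) unfolding strip_partial_def W_def E_def by simp
  moreover have "strip_partial k L \<sigma> \<epsilon> (Suc l) = (W \<union> N, E @ [(?e, \<sigma> (Suc l), \<epsilon> (Suc l))])"
    using assms(2)
    unfolding strip_partial_def strip_hypergraph_def strip_vertices_def W_def N_def E_def
    by (auto simp: strip_labelled_edges_Suc)
  moreover have "qval k P (W \<union> N, E @ [(?e, \<sigma> (Suc l), \<epsilon> (Suc l))]) \<le> qval k P (W, E)"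
  proof (rule qval_snoc_edge_le[OF assms(1)])
    show "W \<union> N \<subseteq> strip_vertices k L"
      using assms(2) unfolding strip_vertices_def W_def N_def by auto
    show "\<forall>(e', _) \<in> set E. set e' \<subseteq> W"
      using strip_labelled_edges_subset[OF assms(2)] unfolding E_def W_def .
    show "finite N" "card N \<le> k"
      unfolding N_def by (simp_all add: card_cartesian_product)
    show "N \<subseteq> set ?e" "set ?e \<subseteq> W \<union> N"
      using assms(2) unfolding set_strip_edge W_def N_def by auto
  qed
  ultimately show ?thesis by simp
qed

theorem mainTheorem16:
  fixes k L :: nat and \<sigma> :: "nat \<Rightarrow> nat \<Rightarrow> nat" and \<epsilon> :: "nat \<Rightarrow> bool"
    and P :: "(nat \<times> nat) set set"
  assumes "k \<ge> 1" and "L \<ge> 1"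
    and "\<forall>l \<in> {1..L}. \<sigma> l permutes {1..2*k}"
    and "partition_on (strip_vertices k L) P"
  shows "qval k P (strip_partial k L \<sigma> \<epsilon> 0) \<le> 0
       \<and> (\<forall>l < L. qval k P (strip_partial k L \<sigma> \<epsilon> (l+1)) \<le> qval k P (strip_partial k L \<sigma> \<epsilon> l))
       \<and> qval k P (strip_hypergraph k L \<sigma> \<epsilon>) = qval k P (strip_partial k L \<sigma> \<epsilon> L)
       \<and> qval k P (strip_hypergraph k L \<sigma> \<epsilon>) \<le> 0"
proof -
  let ?q = "\<lambda>l. qval k P (strip_partial k L \<sigma> \<epsilon> l)"
  have base: "?q 0 \<le> 0"
    using qval_strip_partial_0_le[OF assms(4,2)] .
  have step: "\<forall>l < L. ?q (l+1) \<le> ?q l"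
    using qval_strip_partial_Suc_le[OF assms(4)] by simp
  have "?q L \<le> ?q 0"
    by (rule lift_Suc_antimono_le_ivl[of "{..<L}"]) (use step in auto)
  moreover have "strip_hypergraph k L \<sigma> \<epsilon> = strip_partial k L \<sigma> \<epsilon> L"
    unfolding strip_partial_def by simp
  ultimately show ?thesis using base step by simp
qed

end
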